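(* Let $p\in(1/2,1)$. For $\epsilon\in[0,1)$ not equal to any $\epsilon_m$, let $m=m(\epsilon)$ be the unique integer $m\ge1$ with $\epsilon\in(\epsilon_m,\epsilon_{m+1})$, and define integers $r_1(\epsilon),r_2(\epsilon),\ldots$ by $r_1=m+1$ and, for $n\ge2$, $r_n=m$ if $\sum_{i=1}^{n-1}(r_i\eta-1)+m\eta>1$ and $r_n=m+1$ otherwise. Fix an integer $r\ge1$. Then for every $i\ge2$, $r_i(\epsilon)\to r$ as $\epsilon\to\epsilon_r$ (i.e. $r_i(\epsilon)=r$ for all such $\epsilon$ sufficiently close to $\epsilon_r$; for $r=1$ this is understood as $\epsilon\to\epsilon_1^+$).
   Context: Let $\alpha=p/(1-p)$ and for $r=1,2,\ldots$ let $\epsilon_r=\dfrac{\alpha-\alpha^{1/r}}{\alpha^{1/r+1}-1}$ (an increasing sequence with $\epsilon_1=0$ and $\epsilon_r\to1$). For $\epsilon\in[0,1)$ let $a=p+(1-p)\epsilon$, $b=p(1-\epsilon)$ and $\eta=\eta(\epsilon)=\log\big(a/(1-b)\big)/\log\alpha$. The integer $r_n$ is the number of consecutive $Y$ observations needed, in the $n$-th stage of an enumeration of paths, for the walk (starting at $0$, up-steps $\eta$, down-steps $1$, stopped on leaving $[-1,1]$) to exceed $1$. *)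

theory Defs
  imports "HOL-Analysis.Analysis"
begin

definition alpha :: "real \<Rightarrow> real" where
  "alpha p = p / (1 - p)"

definition eps :: "real \<Rightarrow> nat \<Rightarrow> real" where
  "eps p r = (alpha p - alpha p powr (1 / real r)) / (alpha p powr (1 / real r + 1) - 1)"

definition eta :: "real \<Rightarrow> real \<Rightarrow> real" where
  "eta p e = ln ((p + (1 - p) * e) / (1 - p * (1 - e))) / ln (alpha p)"

definition mval :: "real \<Rightarrow> real \<Rightarrow> nat" where
  "mval p e = (THE m. 1 \<le> m \<and> eps p m < e \<and> e < eps p (Suc m))"

text \<open>rS h m n = (r_(n+1), sum_(i=1)^(n+1) (r_i * h - 1)), where
  r_1 = m+1 and r_(n) = m if sum_(i<n)(r_i h - 1) + m h > 1, else m+1.\<close>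
fun rS :: "real \<Rightarrow> nat \<Rightarrow> nat \<Rightarrow> nat \<times> real" where
  "rS h m 0 = (m + 1, real (m + 1) * h - 1)"
| "rS h m (Suc n) =
     (let S = snd (rS h m n);
          r = (if S + real m * h > 1 then m else m + 1)
      in (r, S + real r * h - 1))"

definition rseq :: "real \<Rightarrow> real \<Rightarrow> nat \<Rightarrow> nat" where
  "rseq p e i = fst (rS (eta p e) (mval p e) (i - 1))"

definition admissible :: "real \<Rightarrow> real set" where
  "admissible p = {e. 0 \<le> e \<and> e < 1 \<and> (\<forall>m\<ge>1. e \<noteq> eps p m)}"

end

theory Submission
  imports Defs
begin

text \<open>Write \<open>\<alpha> = alpha p > 1\<close>. In terms of \<open>\<alpha>\<close>, \<open>eta p e\<close> is \<open>log\<^sub>\<alpha>\<close> of the Moebius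
  transformation \<open>(\<alpha> + e) / (1 + \<alpha> e)\<close>, which maps \<open>\<epsilon>\<^sub>k\<close> to \<open>\<alpha> powr (1/k)\<close>; hence
  \<open>eta p \<epsilon>\<^sub>k = 1/k\<close>, and since \<open>eta p\<close> is continuous and strictly decreasing on \<open>[0,\<infinity>)\<close>,
  the \<open>\<epsilon>\<^sub>k\<close> increase and \<open>eta p e \<rightarrow> 1/r\<close> as \<open>e \<rightarrow> \<epsilon>\<^sub>r\<close>.
  For \<open>e\<close> slightly above \<open>\<epsilon>\<^sub>r\<close> we have \<open>m = r\<close>, the first partial sum is about \<open>1/r\<close>
  and every later step \<open>r \<eta> - 1\<close> is about \<open>0\<close>, so the test sum stays near \<open>1 + 1/r > 1\<close>
  and \<open>r\<^sub>n = r\<close> for \<open>n \<ge> 2\<close>. For \<open>e\<close> slightly below \<open>\<epsilon>\<^sub>r\<close> (only possible when \<open>r \<ge> 2\<close>)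
  we have \<open>m = r - 1\<close>, all partial sums are about \<open>0\<close> and the test sum stays near
  \<open>1 - 1/r < 1\<close>, so \<open>r\<^sub>n = m + 1 = r\<close>. Only the finitely many steps up to a fixed index
  matter, so continuity of \<open>eta p\<close> suffices.\<close>

lemma alpha_gt_1: "1/2 < p \<Longrightarrow> p < 1 \<Longrightarrow> 1 < alpha p"
  by (simp add: alpha_def field_simps)

lemma eta_eq_log_moebius:
  assumes "p < 1"
  shows "eta p e = ln ((alpha p + e) / (1 + alpha p * e)) / ln (alpha p)"
proof -
  have "alpha p + e = (p + (1 - p) * e) / (1 - p)" "1 + alpha p * e = (1 - p * (1 - e)) / (1 - p)"
    using assms by (simp_all add: alpha_def field_simps)
  then have "(p + (1 - p) * e) / (1 - p * (1 - e)) = (alpha p + e) / (1 + alpha p * e)"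
    using assms by simp
  then show ?thesis
    by (simp add: eta_def)
qed

lemma eps_eq:
  assumes "1/2 < p" "p < 1"
  shows "eps p k = (alpha p - alpha p powr (1 / real k)) / (alpha p * alpha p powr (1 / real k) - 1)"
proof -
  have "0 < alpha p"
    using alpha_gt_1[OF assms] by simp
  then show ?thesis
    by (simp add: eps_def powr_add mult.commute)
qed

lemma eps_one: "1/2 < p \<Longrightarrow> p < 1 \<Longrightarrow> eps p 1 = 0"
  using alpha_gt_1[of p] by (simp add: eps_def abs_of_pos)

lemma eps_nonneg:
  assumes p: "1/2 < p" "p < 1" and k: "1 \<le> k"
  shows "0 \<le> eps p k"
proof -
  define a b where "a = alpha p" and "b = a powr (1 / real k)"
  have a: "1 < a"
    using alpha_gt_1[OF p] by (simp add: a_def)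
  then have "1 \<le> b" "b \<le> a"
    using powr_mono[of "1 / real k" 1 a] k by (auto simp: b_def ge_one_powr_ge_zero)
  moreover have "1 < a * b"
    using a \<open>1 \<le> b\<close> less_le_trans[of 1 a "a * b"] by simp
  ultimately show ?thesis
    by (simp add: eps_eq[OF p] a_def[symmetric] b_def[symmetric])
qed

lemma eta_eps:
  assumes p: "1/2 < p" "p < 1" and k: "1 \<le> k"
  shows "eta p (eps p k) = 1 / real k"
proof -
  define a b where "a = alpha p" and "b = a powr (1 / real k)"
  have a: "1 < a"
    using alpha_gt_1[OF p] by (simp add: a_def)
  have "1 \<le> b"
    using a by (simp add: b_def ge_one_powr_ge_zero)
  then have "1 < a * b"
    using a less_le_trans[of 1 a "a * b"] by simp
  then have "a + eps p k = b * (a\<^sup>2 - 1) / (a * b - 1)" "1 + a * eps p k = (a\<^sup>2 - 1) / (a * b - 1)"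
    by (simp_all add: eps_eq[OF p] a_def[symmetric] b_def[symmetric] field_simps power2_eq_square)
  moreover have "1 < a\<^sup>2"
    using a less_1_mult[of a a] by (simp add: power2_eq_square)
  ultimately have "(a + eps p k) / (1 + a * eps p k) = b"
    using \<open>1 < a * b\<close> by simp
  then show ?thesis
    using a by (simp add: eta_eq_log_moebius p a_def[symmetric] b_def)
qed

lemma eta_strict_antimono:
  assumes p: "1/2 < p" "p < 1" and "0 \<le> e" "e < e'"
  shows "eta p e' < eta p e"
proof -
  define a where "a = alpha p"
  have a: "1 < a"
    using alpha_gt_1[OF p] by (simp add: a_def)
  have "(a\<^sup>2 - 1) * e < (a\<^sup>2 - 1) * e'"
    using a assms(4) by (simp add: power2_eq_square less_1_mult)
  then have "(a + e') * (1 + a * e) < (a + e) * (1 + a * e')"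
    by (simp add: algebra_simps power2_eq_square)
  then have "(a + e') / (1 + a * e') < (a + e) / (1 + a * e)"
    using a assms(3,4) by (simp add: divide_simps add_pos_nonneg)
  moreover have "0 < (a + e') / (1 + a * e')"
    using a assms(3,4) by (simp add: add_pos_nonneg)
  ultimately show ?thesis
    using a by (simp add: eta_eq_log_moebius p a_def[symmetric] divide_strict_right_mono)
qed

lemma eps_strict_mono:
  assumes p: "1/2 < p" "p < 1" and "1 \<le> k" "k < k'"
  shows "eps p k < eps p k'"
proof (rule ccontr)
  assume "\<not> eps p k < eps p k'"
  then have "eta p (eps p k) \<le> eta p (eps p k')"
    using eta_strict_antimono[OF p eps_nonneg[OF p], of k' "eps p k"] assms(3,4)
    by (cases "eps p k = eps p k'") auto
  moreover have "1 / real k' < 1 / real k"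
    using assms(3,4) by (simp add: frac_less2)
  ultimately show False
    using assms by (simp add: eta_eps)
qed

lemma eps_mono:
  assumes p: "1/2 < p" "p < 1" and "1 \<le> k" "k \<le> k'"
  shows "eps p k \<le> eps p k'"
  using eps_strict_mono[OF p, of k k'] assms(3,4) by (cases "k = k'") auto

lemma mval_eq:
  assumes p: "1/2 < p" "p < 1" and m: "1 \<le> m" "eps p m < e" "e < eps p (Suc m)"
  shows "mval p e = m"
  unfolding mval_def
proof (rule the_equality)
  show "1 \<le> m \<and> eps p m < e \<and> e < eps p (Suc m)"
    using m by simp
next
  fix m' assume m': "1 \<le> m' \<and> eps p m' < e \<and> e < eps p (Suc m')"
  show "m' = m"
  proof (rule ccontr)
    assume "m' \<noteq> m"
    then have "eps p (Suc m) \<le> eps p m' \<or> eps p (Suc m') \<le> eps p m"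
      using eps_mono[OF p, of "Suc m" m'] eps_mono[OF p, of "Suc m'" m] by linarith
    then show False
      using m m' by linarith
  qed
qed

lemma rS_eq_if_sums_exceed:
  assumes "\<forall>k<n. real (m+1)*h - 1 + real k*(real m*h - 1) + real m*h > 1"
  shows "rS h m n = (if n = 0 then m+1 else m, real (m+1)*h - 1 + real n*(real m*h - 1))"
  using assms
proof (induction n)
  case (Suc n)
  then have "rS h m n = (if n = 0 then m+1 else m, real (m+1)*h - 1 + real n*(real m*h - 1))"
    and "real (m+1)*h - 1 + real n*(real m*h - 1) + real m*h > 1"
    by simp_all
  then show ?case
    by (simp add: Let_def algebra_simps)
qed simp

lemma rS_eq_if_sums_bounded:
  assumes "\<forall>k<n. real (k+1)*(real (m+1)*h - 1) + real m*h \<le> 1"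
  shows "rS h m n = (m+1, real (n+1)*(real (m+1)*h - 1))"
  using assms
proof (induction n)
  case (Suc n)
  then have "rS h m n = (m+1, real (n+1)*(real (m+1)*h - 1))"
    and "real (n+1)*(real (m+1)*h - 1) + real m*h \<le> 1"
    by simp_all
  then show ?case
    by (simp add: Let_def algebra_simps)
qed simp

lemma eventually_fst_rS_Suc_eq:
  assumes lim: "(h \<longlongrightarrow> 1 / real m) F" and m: "1 \<le> m"
  shows "eventually (\<lambda>x. fst (rS (h x) m (Suc n)) = m) F"
proof -
  have "\<forall>k\<in>{..<Suc n}. eventually
          (\<lambda>x. real (m+1)*h x - 1 + real k*(real m*h x - 1) + real m*h x > 1) F"
  proof
    fix k :: nat
    have "((\<lambda>x. real (m+1)*h x - 1 + real k*(real m*h x - 1) + real m*h x)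
            \<longlongrightarrow> 1 + 1 / real m) F"
      using m by (auto intro!: tendsto_eq_intros lim simp: field_simps)
    then show "eventually
        (\<lambda>x. real (m+1)*h x - 1 + real k*(real m*h x - 1) + real m*h x > 1) F"
      by (rule order_tendstoD) (use m in simp)
  qed
  then have "eventually (\<lambda>x. \<forall>k\<in>{..<Suc n}.
      real (m+1)*h x - 1 + real k*(real m*h x - 1) + real m*h x > 1) F"
    by (intro eventually_ball_finite) auto
  then show ?thesis
    by eventually_elim (simp add: rS_eq_if_sums_exceed)
qed

lemma eventually_fst_rS_eq_Suc:
  assumes lim: "(h \<longlongrightarrow> 1 / real (Suc m)) F"
  shows "eventually (\<lambda>x. fst (rS (h x) m n) = Suc m) F"
proof -
  have "\<forall>k\<in>{..<n}. eventually
          (\<lambda>x. real (k+1)*(real (m+1)*h x - 1) + real m*h x < 1) F"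
  proof
    fix k :: nat
    have "((\<lambda>x. real (k+1)*(real (m+1)*h x - 1) + real m*h x)
            \<longlongrightarrow> real m / real (Suc m)) F"
      by (auto intro!: tendsto_eq_intros lim simp: divide_simps)
    then show "eventually (\<lambda>x. real (k+1)*(real (m+1)*h x - 1) + real m*h x < 1) F"
      by (rule order_tendstoD) simp
  qed
  then have "eventually (\<lambda>x. \<forall>k\<in>{..<n}.
      real (k+1)*(real (m+1)*h x - 1) + real m*h x < 1) F"
    by (intro eventually_ball_finite) auto
  then show ?thesis
    by eventually_elim (simp add: rS_eq_if_sums_bounded less_imp_le)
qed

lemma tendsto_eta_eps:
  assumes p: "1/2 < p" "p < 1" and k: "1 \<le> k"
  shows "(eta p \<longlongrightarrow> 1 / real k) (at (eps p k) within S)"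
proof -
  have "0 < alpha p + eps p k" "0 < 1 + alpha p * eps p k" "0 < ln (alpha p)"
    using alpha_gt_1[OF p] eps_nonneg[OF p k] by (simp_all add: add_pos_nonneg)
  then have "((\<lambda>e. eta p e) \<longlongrightarrow> eta p (eps p k)) (at (eps p k) within S)"
    unfolding eta_eq_log_moebius[OF p(2)] by (intro tendsto_intros) auto
  then show ?thesis
    by (simp add: eta_eps[OF p k])
qed

lemma rseq_Suc_Suc: "rseq p e (Suc (Suc n)) = fst (rS (eta p e) (mval p e) (Suc n))"
  by (simp add: rseq_def del: rS.simps)

lemma eventually_rseq_right_of_eps:
  assumes p: "1/2 < p" "p < 1" and r: "1 \<le> r"
  shows "eventually (\<lambda>e. eps p r < e \<longrightarrow> rseq p e (Suc (Suc n)) = r) (at (eps p r) within S)"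
proof -
  have "eps p r < eps p (Suc r)"
    using eps_strict_mono[OF p r] by simp
  then have "eventually (\<lambda>e. e < eps p (Suc r)) (at (eps p r) within S)"
    by (rule order_tendstoD(2)[OF tendsto_ident_at])
  moreover have "eventually (\<lambda>e. fst (rS (eta p e) r (Suc n)) = r) (at (eps p r) within S)"
    using eventually_fst_rS_Suc_eq[OF tendsto_eta_eps[OF p r] r] .
  ultimately show ?thesis
    by eventually_elim (simp add: rseq_Suc_Suc mval_eq[OF p r] del: rS.simps)
qed

lemma eventually_rseq_left_of_eps:
  assumes p: "1/2 < p" "p < 1" and q: "1 \<le> q"
  shows "eventually (\<lambda>e. e < eps p (Suc q) \<longrightarrow> rseq p e (Suc (Suc n)) = Suc q)
           (at (eps p (Suc q)) within S)"
proof -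
  have "eps p q < eps p (Suc q)"
    using eps_strict_mono[OF p q] by simp
  then have "eventually (\<lambda>e. eps p q < e) (at (eps p (Suc q)) within S)"
    by (rule order_tendstoD(1)[OF tendsto_ident_at])
  moreover have "eventually (\<lambda>e. fst (rS (eta p e) q (Suc n)) = Suc q) (at (eps p (Suc q)) within S)"
    using tendsto_eta_eps[OF p, of "Suc q"] by (intro eventually_fst_rS_eq_Suc) simp
  ultimately show ?thesis
    by eventually_elim (simp add: rseq_Suc_Suc mval_eq[OF p q] del: rS.simps)
qed

theorem lemma3:
  fixes p :: real and r :: nat
  assumes "1/2 < p" and "p < 1" and "1 \<le> r"
  shows "\<forall>i\<ge>2. eventually (\<lambda>e. rseq p e i = r) (at (eps p r) within admissible p)"
proof (intro allI impI)
  note p = assms(1,2) and r = assms(3)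
  let ?F = "at (eps p r) within admissible p"
  fix i :: nat assume "2 \<le> i"
  then obtain n where i: "i = Suc (Suc n)"
    by (metis add_2_eq_Suc le_Suc_ex)
  have "eventually (\<lambda>e. e \<in> admissible p) ?F"
    by (simp add: eventually_at_filter)
  moreover have "eventually (\<lambda>e. eps p r < e \<longrightarrow> rseq p e i = r) ?F"
    using eventually_rseq_right_of_eps[OF p r] i by simp
  moreover have "eventually (\<lambda>e. e \<in> admissible p \<longrightarrow> e < eps p r \<longrightarrow> rseq p e i = r) ?F"
  proof (cases "r = 1")
    case True
    then have "eps p r = 0"
      using eps_one[OF p] by simp
    then show ?thesis
      by (intro always_eventually) (simp add: admissible_def)
  next
    case False
    then obtain q where "r = Suc q" "1 \<le> q"
      using r by (cases r) auto
    then show ?thesis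
      using eventually_rseq_left_of_eps[OF p, of q n "admissible p"] i by (auto elim: eventually_mono)
  qed
  ultimately show "eventually (\<lambda>e. rseq p e i = r) ?F"
  proof eventually_elim
    case (elim e)
    then have "e \<noteq> eps p r"
      using r by (simp add: admissible_def)
    with elim show ?case
      by (cases "e < eps p r") auto
  qed
qed

end
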